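(* In the setting described in the context, take $\delta_c=0$ and $\delta_s>0$, so that the problem becomes the CRLB minimization problem $\max\{-\delta_s\,\mathrm{tr}(\mathbf F(\mathbf W)^{-1}):\mathbf W=[\mathbf W_c,\mathbf W_s]\in\mathbb C^{N_t\times(K+N_s)},\ \mathrm{tr}(\mathbf W\mathbf W^H)\le P_t\}$. Then every optimal solution $\mathbf W^\diamond=[\mathbf W_c^\diamond,\mathbf W_s^\diamond]$ of this problem satisfies $\mathrm{rank}(\mathbf W_s^\diamond)\le 3M$.
   Context: Positive integers $N_t,N_r,K,M,L$, nonnegative integer $N_s$; $\sigma_s^2>0$; $P_t>0$. $\mathbf W_c\in\mathbb C^{N_t\times K}$, $\mathbf W_s\in\mathbb C^{N_t\times N_s}$, $\mathbf R_x=\mathbf W_c\mathbf W_c^H+\mathbf W_s\mathbf W_s^H$. Sensing model: differentiable $\mathbf a:\mathbb R^2\to\mathbb C^{N_t}$, $\mathbf b:\mathbb R^2\to\mathbb C^{N_r}$; parameters $\theta_m,\phi_m\in\mathbb R,\alpha_m\in\mathbb C$ ($m=1,\dots,M$); $\mathbf A=[\mathbf a(\theta_m,\phi_m)]_m$, $\mathbf B=[\mathbf b(\theta_m,\phi_m)]_m$, $\mathbf U=\mathrm{diag}(\alpha_m)$; $\dot{\mathbf A}_\theta,\dot{\mathbf A}_\phi,\dot{\mathbf B}_\theta,\dot{\mathbf B}_\phi$ have $m$-th columns the partial derivatives of $\mathbf a$ resp. $\mathbf b$ w.r.t. first resp. second argument at $(\theta_m,\phi_m)$. $\mathbf F(\mathbf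 W)=\frac{2L}{\sigma_s^2}\begin{bmatrix}\Re\mathbf F_{11}&\Re\mathbf F_{12}&\Re\mathbf F_{13}&-\Im\mathbf F_{13}\\ \Re\mathbf F_{12}^{\mathsf T}&\Re\mathbf F_{22}&\Re\mathbf F_{23}&-\Im\mathbf F_{23}\\ \Re\mathbf F_{13}^{\mathsf T}&\Re\mathbf F_{23}^{\mathsf T}&\Re\mathbf F_{33}&-\Im\mathbf F_{33}\\ -\Im\mathbf F_{13}^{\mathsf T}&-\Im\mathbf F_{23}^{\mathsf T}&-\Im\mathbf F_{33}^{\mathsf T}&\Re\mathbf F_{33}\end{bmatrix}$ with $\mathbf F_{11}=(\mathbf U\mathbf A^H\mathbf R_x\mathbf A\mathbf U^H)^{\mathsf T}\odot(\dot{\mathbf B}_\theta^H\dot{\mathbf B}_\theta)+(\mathbf U\mathbf A^H\mathbf R_x\dot{\mathbf A}_\theta\mathbf U^H)^{\mathsf T}\odot(\mathbf B^H\dot{\mathbf B}_\theta)+(\mathbf U\dot{\mathbf A}_\theta^H\mathbf R_x\mathbf A\mathbf U^H)^{\mathsf T}\odot(\dot{\mathbf B}_\theta^H\mathbf B)+(\mathbf U\dot{\mathbf A}_\theta^H\mathbf R_x\dot{\mathbf A}_\theta\mathbf U^H)^{\mathsf T}\odot(\mathbf B^H\mathbf B)$; $\mathbf F_{12}=(\mathbf U\mathbf A^H\mathbf R_x\mathbf A\mathbf U^H)^{\mathsf T}\odot(\dot{\mathbf B}_\theta^H\dot{\mathbf B}_\phi)+(\mathbf U\mathbf A^H\mathbf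 R_x\dot{\mathbf A}_\theta\mathbf U^H)^{\mathsf T}\odot(\mathbf B^H\dot{\mathbf B}_\phi)+(\mathbf U\dot{\mathbf A}_\phi^H\mathbf R_x\mathbf A\mathbf U^H)^{\mathsf T}\odot(\dot{\mathbf B}_\theta^H\mathbf B)+(\mathbf U\dot{\mathbf A}_\phi^H\mathbf R_x\dot{\mathbf A}_\theta\mathbf U^H)^{\mathsf T}\odot(\mathbf B^H\mathbf B)$; $\mathbf F_{22}$ = $\mathbf F_{11}$ with $\theta\to\phi$; $\mathbf F_{13}=(\mathbf A^H\mathbf R_x\mathbf A\mathbf U^H)^{\mathsf T}\odot(\dot{\mathbf B}_\theta^H\mathbf B)+(\mathbf A^H\mathbf R_x\dot{\mathbf A}_\theta\mathbf U^H)^{\mathsf T}\odot(\mathbf B^H\mathbf B)$; $\mathbf F_{23}$ = $\mathbf F_{13}$ with $\theta\to\phi$; $\mathbf F_{33}=(\mathbf A^H\mathbf R_x\mathbf A)^{\mathsf T}\odot(\mathbf B^H\mathbf B)$ ($\odot$ Hadamard product); the objective is considered where $\mathbf F(\mathbf W)$ is invertible. *)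

theory Defs
  imports "HOL-Analysis.Analysis" "Jordan_Normal_Form.Matrix" "Jordan_Normal_Form.DL_Rank"
          "Jordan_Normal_Form.Schur_Decomposition"
begin

abbreviation herm :: "complex mat \<Rightarrow> complex mat" where
  "herm A \<equiv> mat_adjoint A"

definition mtrace :: "'a :: comm_monoid_add mat \<Rightarrow> 'a" where
  "mtrace A = (\<Sum>i<dim_row A. A $$ (i, i))"

definition hadamard :: "'a :: times mat \<Rightarrow> 'a mat \<Rightarrow> 'a mat" (infixl \<open>\<odot>\<close> 70) where
  "A \<odot> B = mat (dim_row A) (dim_col A) (\<lambda>(i, j). A $$ (i, j) * B $$ (i, j))"

text \<open>Inverse of a square matrix (meaningful when the matrix is invertible).\<close>
definition mat_inv :: "'a :: semiring_1 mat \<Rightarrow> 'a mat" where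
  "mat_inv F = (THE B. B \<in> carrier_mat (dim_row F) (dim_row F) \<and>
                       F * B = 1\<^sub>m (dim_row F) \<and> B * F = 1\<^sub>m (dim_row F))"

definition hcat :: "'a mat \<Rightarrow> 'a mat \<Rightarrow> 'a mat" where
  "hcat A B = mat (dim_row A) (dim_col A + dim_col B)
      (\<lambda>(i, j). if j < dim_col A then A $$ (i, j) else B $$ (i, j - dim_col A))"

definition block4 :: "nat \<Rightarrow> (nat \<Rightarrow> nat \<Rightarrow> real mat) \<Rightarrow> real mat" where
  "block4 M blk = mat (4 * M) (4 * M) (\<lambda>(i, j). blk (i div M) (j div M) $$ (i mod M, j mod M))"

text \<open>Steering matrices: columns m < M are a(theta_m, phi_m), and their partial
  derivatives w.r.t. the first resp. second argument. a is given componentwise: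
  a t p i is the i-th entry of a(t,p).\<close>
definition steer :: "nat \<Rightarrow> nat \<Rightarrow> (real \<Rightarrow> real \<Rightarrow> nat \<Rightarrow> complex)
    \<Rightarrow> (nat \<Rightarrow> real) \<Rightarrow> (nat \<Rightarrow> real) \<Rightarrow> complex mat" where
  "steer N M a th ph = mat N M (\<lambda>(i, m). a (th m) (ph m) i)"

definition steer_dth :: "nat \<Rightarrow> nat \<Rightarrow> (real \<Rightarrow> real \<Rightarrow> nat \<Rightarrow> complex)
    \<Rightarrow> (nat \<Rightarrow> real) \<Rightarrow> (nat \<Rightarrow> real) \<Rightarrow> complex mat" where
  "steer_dth N M a th ph =
     mat N M (\<lambda>(i, m). vector_derivative (\<lambda>t. a t (ph m) i) (at (th m)))"

definition steer_dph :: "nat \<Rightarrow> nat \<Rightarrow> (real \<Rightarrow> real \<Rightarrow> nat \<Rightarrow> complex)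
    \<Rightarrow> (nat \<Rightarrow> real) \<Rightarrow> (nat \<Rightarrow> real) \<Rightarrow> complex mat" where
  "steer_dph N M a th ph =
     mat N M (\<lambda>(i, m). vector_derivative (\<lambda>p. a (th m) p i) (at (ph m)))"

definition diag_alpha :: "nat \<Rightarrow> (nat \<Rightarrow> complex) \<Rightarrow> complex mat" where
  "diag_alpha M al = mat M M (\<lambda>(i, j). if i = j then al i else 0)"

text \<open>Notation: A, B, U as in the paper; X1/X2 stand for the derivative matrices of A
  (w.r.t. theta resp. phi) and Y1/Y2 for the derivative matrices of B.
  tq U X R Y = (U X^H R Y U^H)^T.\<close>
definition tq :: "complex mat \<Rightarrow> complex mat \<Rightarrow> complex mat \<Rightarrow> complex mat \<Rightarrow> complex mat" where
  "tq U X R Y = transpose_mat (U * herm X * R * Y * herm U)"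

text \<open>F11 (with X1 = X2, Y1 = Y2 = dtheta) and F22 (with phi), and F12 (X1 = dA_theta,
  X2 = dA_phi, Y1 = dB_theta, Y2 = dB_phi), exactly following the paper's formulas:
  F_pq = (U A^H R A U^H)^T o (Y1^H Y2) + (U A^H R X1 U^H)^T o (B^H Y2)
       + (U X2^H R A U^H)^T o (Y1^H B) + (U X2^H R X1 U^H)^T o (B^H B).\<close>
definition Fpq :: "complex mat \<Rightarrow> complex mat \<Rightarrow> complex mat \<Rightarrow> complex mat \<Rightarrow> complex mat
    \<Rightarrow> complex mat \<Rightarrow> complex mat \<Rightarrow> complex mat \<Rightarrow> complex mat" where
  "Fpq U R A X1 X2 B Y1 Y2 =
       tq U A R A \<odot> (herm Y1 * Y2) + tq U A R X1 \<odot> (herm B * Y2)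
     + tq U X2 R A \<odot> (herm Y1 * B) + tq U X2 R X1 \<odot> (herm B * B)"

text \<open>F13 (X = dA_theta, Y = dB_theta) and F23 (phi):
  (A^H R A U^H)^T o (Y^H B) + (A^H R X U^H)^T o (B^H B).\<close>
definition Fp3 :: "complex mat \<Rightarrow> complex mat \<Rightarrow> complex mat \<Rightarrow> complex mat
    \<Rightarrow> complex mat \<Rightarrow> complex mat \<Rightarrow> complex mat" where
  "Fp3 U R A X B Y =
       transpose_mat (herm A * R * A * herm U) \<odot> (herm Y * B)
     + transpose_mat (herm A * R * X * herm U) \<odot> (herm B * B)"

definition F33 :: "complex mat \<Rightarrow> complex mat \<Rightarrow> complex mat \<Rightarrow> complex mat" where
  "F33 R A B = transpose_mat (herm A * R * A) \<odot> (herm B * B)"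

definition re_mat :: "complex mat \<Rightarrow> real mat" where "re_mat X = map_mat Re X"
definition im_mat :: "complex mat \<Rightarrow> real mat" where "im_mat X = map_mat Im X"

definition FIM_blocks :: "complex mat \<Rightarrow> complex mat \<Rightarrow> complex mat \<Rightarrow> complex mat
    \<Rightarrow> complex mat \<Rightarrow> complex mat \<Rightarrow> nat \<Rightarrow> nat \<Rightarrow> real mat" where
  "FIM_blocks G11 G12 G13 G22 G23 G33 p q =
     [[re_mat G11, re_mat G12, re_mat G13, - im_mat G13],
      [transpose_mat (re_mat G12), re_mat G22, re_mat G23, - im_mat G23],
      [transpose_mat (re_mat G13), transpose_mat (re_mat G23), re_mat G33, - im_mat G33],
      [- transpose_mat (im_mat G13), - transpose_mat (im_mat G23),
       - transpose_mat (im_mat G33), re_mat G33]] ! p ! q"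

definition FIM :: "nat \<Rightarrow> nat \<Rightarrow> nat \<Rightarrow> nat \<Rightarrow> real \<Rightarrow>
    (real \<Rightarrow> real \<Rightarrow> nat \<Rightarrow> complex) \<Rightarrow> (real \<Rightarrow> real \<Rightarrow> nat \<Rightarrow> complex) \<Rightarrow>
    (nat \<Rightarrow> real) \<Rightarrow> (nat \<Rightarrow> real) \<Rightarrow> (nat \<Rightarrow> complex) \<Rightarrow>
    complex mat \<Rightarrow> complex mat \<Rightarrow> real mat" where
  "FIM Nt Nr M L sigma2 a b th ph al Wc Ws =
    (let R = Wc * herm Wc + Ws * herm Ws;
         A = steer Nt M a th ph; At = steer_dth Nt M a th ph; Ap = steer_dph Nt M a th ph;
         B = steer Nr M b th ph; Bt = steer_dth Nr M b th ph; Bp = steer_dph Nr M b th ph;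
         U = diag_alpha M al
     in (2 * real L / sigma2) \<cdot>\<^sub>m block4 M
          (FIM_blocks (Fpq U R A At At B Bt Bt) (Fpq U R A At Ap B Bt Bp) (Fp3 U R A At B Bt)
                      (Fpq U R A Ap Ap B Bp Bp) (Fp3 U R A Ap B Bp) (F33 R A B)))"

definition feasible :: "nat \<Rightarrow> nat \<Rightarrow> nat \<Rightarrow> real \<Rightarrow> complex mat \<Rightarrow> complex mat \<Rightarrow> bool" where
  "feasible Nt K Ns Pt Wc Ws \<longleftrightarrow>
     Wc \<in> carrier_mat Nt K \<and> Ws \<in> carrier_mat Nt Ns \<and>
     Re (mtrace (hcat Wc Ws * herm (hcat Wc Ws))) \<le> Pt"

end

theory Submission
  imports Defs
begin

text \<open>The FIM is \<open>2L/\<sigma>\<^sub>s\<^sup>2\<close> times the real Gram matrix of the partial derivatives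
  of the noiseless echo \<open>B U A\<^sup>H W\<close> with respect to \<open>\<theta>\<^sub>m\<close>, \<open>\<phi>\<^sub>m\<close>, \<open>Re \<alpha>\<^sub>m\<close> and
  \<open>Im \<alpha>\<^sub>m\<close>, and these derivatives depend on \<open>W = [W\<^sub>c, W\<^sub>s]\<close> only through \<open>X\<^sup>H W\<close>, where
  \<open>X = [A, \<partial>\<^sub>\<theta>A, \<partial>\<^sub>\<phi>A]\<close> has \<open>3M\<close> columns. Hence an invertible FIM has an inverse of positive
  trace, and scaling \<open>W\<close> by \<open>\<kappa>\<close> scales the FIM by \<open>\<kappa>\<^sup>2\<close>.
  Write \<open>W\<^sub>s = X T + V\<close> with \<open>X\<^sup>H V = 0\<close>. Replacing \<open>W\<^sub>s\<close> by \<open>X T\<close> keeps the FIM and, if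
  \<open>V \<noteq> 0\<close>, strictly lowers the transmit power; scaling back up to the power budget then
  multiplies the FIM by a factor \<open>> 1\<close> and strictly lowers the CRLB, contradicting optimality.
  So \<open>V = 0\<close> and \<open>rank W\<^sub>s \<le> rank (X T) \<le> 3M\<close>.\<close>

definition cinner :: "'a set \<Rightarrow> ('a \<Rightarrow> complex) \<Rightarrow> ('a \<Rightarrow> complex) \<Rightarrow> complex" where
  "cinner S u v = (\<Sum>x\<in>S. cnj (u x) * v x)"

lemma cinner_commute: "cinner S v u = cnj (cinner S u v)"
  by (simp add: cinner_def mult.commute)

lemma cinner_add_left: "cinner S (\<lambda>x. u x + w x) v = cinner S u v + cinner S w v"
  by (simp add: cinner_def distrib_right sum.distrib)

lemma cinner_add_right: "cinner S u (\<lambda>x. v x + w x) = cinner S u v + cinner S u w"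
  by (simp add: cinner_def distrib_left sum.distrib)

lemma cinner_diff_right: "cinner S u (\<lambda>x. v x - w x) = cinner S u v - cinner S u w"
  by (simp add: cinner_def right_diff_distrib sum_subtractf)

lemma cinner_mult_left: "cinner S (\<lambda>x. c * u x) v = cnj c * cinner S u v"
  by (simp add: cinner_def sum_distrib_left mult.assoc)

lemma cinner_mult_right: "cinner S u (\<lambda>x. c * v x) = c * cinner S u v"
  by (simp add: cinner_def sum_distrib_left algebra_simps)

lemma cinner_sum_left: "cinner S (\<lambda>x. \<Sum>k\<in>J. u k x) v = (\<Sum>k\<in>J. cinner S (u k) v)"
  by (simp add: cinner_def sum_distrib_right sum.swap[of _ J])

lemma cinner_sum_right: "cinner S u (\<lambda>x. \<Sum>k\<in>J. v k x) = (\<Sum>k\<in>J. cinner S u (v k))"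
  by (simp add: cinner_def sum_distrib_left sum.swap[of _ J])

lemma cinner_cong:
  "(\<And>x. x \<in> S \<Longrightarrow> u x = u' x) \<Longrightarrow> (\<And>x. x \<in> S \<Longrightarrow> v x = v' x) \<Longrightarrow> cinner S u v = cinner S u' v'"
  by (simp add: cinner_def)

lemma cinner_self: "cinner S u u = of_real (\<Sum>x\<in>S. (cmod (u x))\<^sup>2)"
  unfolding cinner_def of_real_sum
  by (intro sum.cong refl) (metis complex_norm_square mult.commute of_real_power)

lemma cinner_self_eq_0_iff:
  assumes "finite S"
  shows "cinner S u u = 0 \<longleftrightarrow> (\<forall>x\<in>S. u x = 0)"
proof -
  have "cinner S u u = 0 \<longleftrightarrow> (\<Sum>x\<in>S. (cmod (u x))\<^sup>2) = 0"
    unfolding cinner_self of_real_eq_0_iff ..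
  with assms show ?thesis by (simp add: sum_nonneg_eq_0_iff)
qed

definition tensor :: "('a \<Rightarrow> complex) \<Rightarrow> ('b \<Rightarrow> complex) \<Rightarrow> 'a \<times> 'b \<Rightarrow> complex" where
  "tensor u v = (\<lambda>(x, y). u x * v y)"

lemma cinner_tensor: "cinner (S \<times> T) (tensor u v) (tensor u' v') = cinner S u u' * cinner T v v'"
  unfolding cinner_def tensor_def sum_product sum.cartesian_product
  by (intro sum.cong refl) (auto simp: algebra_simps)

lemma mat_adjoint_dim [simp]:
  "dim_row (herm A) = dim_col A" "dim_col (herm A) = dim_row A"
  by (simp_all add: mat_adjoint_def)

lemma mat_adjoint_index [simp]:
  "i < dim_col A \<Longrightarrow> j < dim_row A \<Longrightarrow> herm A $$ (i, j) = cnj (A $$ (j, i))"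
  by (simp add: mat_adjoint_def mat_of_rows_index)

lemma mat_adjoint_carrier [simp]: "A \<in> carrier_mat n m \<Longrightarrow> herm A \<in> carrier_mat m n"
  by auto

lemma mat_adjoint_adjoint [simp]: "herm (herm A) = A"
  by (intro eq_matI) simp_all

lemma adjoint_mult_index:
  assumes "X \<in> carrier_mat n m" "Y \<in> carrier_mat n k" "i < m" "j < k"
  shows "(herm X * Y) $$ (i, j) = cinner {..<n} (\<lambda>b. X $$ (b, i)) (\<lambda>b. Y $$ (b, j))"
  using assms by (simp add: cinner_def scalar_prod_def atLeast0LessThan)

lemma mat_adjoint_mult:
  assumes "X \<in> carrier_mat n m" "T \<in> carrier_mat m k"
  shows "herm (X * T) = herm T * herm X"
  using assms by (intro eq_matI) (auto simp: scalar_prod_def mult.commute)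

lemma mult_adjoint_index:
  assumes "P \<in> carrier_mat m N" "Q \<in> carrier_mat k N" "j < m" "i < k"
  shows "(P * herm Q) $$ (j, i) = cinner {..<N} (\<lambda>c. Q $$ (i, c)) (\<lambda>c. P $$ (j, c))"
  using assms by (simp add: cinner_def scalar_prod_def atLeast0LessThan mult.commute)

lemma sandwich_index:
  assumes "X \<in> carrier_mat n m" "Y \<in> carrier_mat n m" "W \<in> carrier_mat n N" "i < m" "j < m"
  shows "(herm X * (W * herm W) * Y) $$ (j, i)
       = cinner {..<N} (\<lambda>c. (herm Y * W) $$ (i, c)) (\<lambda>c. (herm X * W) $$ (j, c))"
proof -
  have "herm (herm Y * W) = herm W * Y"
    using mat_adjoint_mult[OF mat_adjoint_carrier[OF assms(2)] assms(3)] by simp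
  moreover have "herm X * (W * herm W) * Y = (herm X * W) * (herm W * Y)"
  proof -
    have "herm X * (W * herm W) = herm X * W * herm W"
      using assms by (simp add: assoc_mult_mat[of "herm X" m n W N "herm W" n])
    also have "\<dots> * Y = herm X * W * (herm W * Y)"
      using assms by (intro assoc_mult_mat) auto
    finally show ?thesis .
  qed
  ultimately have "herm X * (W * herm W) * Y = (herm X * W) * herm (herm Y * W)"
    by simp
  then show ?thesis
    by (simp only:) (rule mult_adjoint_index; use assms in auto)
qed

lemma hcat_dim [simp]:
  "dim_row (hcat P Q) = dim_row P" "dim_col (hcat P Q) = dim_col P + dim_col Q"
  by (simp_all add: hcat_def)

lemma hcat_carrier [simp]: "P \<in> carrier_mat n k \<Longrightarrow> Q \<in> carrier_mat n l \<Longrightarrow> hcat P Q \<in> carrier_mat n (k + l)"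
  by auto

lemma hcat_index:
  "i < dim_row P \<Longrightarrow> j < dim_col P + dim_col Q \<Longrightarrow>
   hcat P Q $$ (i, j) = (if j < dim_col P then P $$ (i, j) else Q $$ (i, j - dim_col P))"
  by (simp add: hcat_def)

lemma mult_hcat:
  assumes "Y \<in> carrier_mat m n" "P \<in> carrier_mat n k" "Q \<in> carrier_mat n l"
  shows "Y * hcat P Q = hcat (Y * P) (Y * Q)"
  using assms by (intro eq_matI) (auto simp: hcat_index scalar_prod_def intro!: sum.cong)

lemma sum_lessThan_add: "(\<Sum>c<k + (l::nat). f c) = (\<Sum>c<k. f c) + (\<Sum>c<l. f (k + c))"
  by (induct l) (simp_all add: add.assoc)

lemma hcat_smult:
  "P \<in> carrier_mat n k \<Longrightarrow> Q \<in> carrier_mat n l \<Longrightarrow> hcat (c \<cdot>\<^sub>m P) (c \<cdot>\<^sub>m Q) = c \<cdot>\<^sub>m hcat P Q"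
  by (intro eq_matI) (auto simp: hcat_def)

lemma hcat_mult_adjoint:
  assumes "P \<in> carrier_mat n k" "Q \<in> carrier_mat n l"
  shows "hcat P Q * herm (hcat P Q) = P * herm P + Q * herm Q"
proof (rule eq_matI)
  fix i j assume "i < dim_row (P * herm P + Q * herm Q)" "j < dim_col (P * herm P + Q * herm Q)"
  with assms have i: "i < n" and j: "j < n" by auto
  have "(hcat P Q * herm (hcat P Q)) $$ (i, j) = (\<Sum>c<k + l. hcat P Q $$ (i, c) * cnj (hcat P Q $$ (j, c)))"
    using assms i j by (simp add: scalar_prod_def atLeast0LessThan)
  also have "\<dots> = (\<Sum>c<k. P $$ (i, c) * cnj (P $$ (j, c))) + (\<Sum>c<l. Q $$ (i, c) * cnj (Q $$ (j, c)))"
    unfolding sum_lessThan_add using assms i j by (simp add: hcat_index)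
  also have "\<dots> = (P * herm P + Q * herm Q) $$ (i, j)"
    using assms i j by (simp add: scalar_prod_def atLeast0LessThan)
  finally show "(hcat P Q * herm (hcat P Q)) $$ (i, j) = (P * herm P + Q * herm Q) $$ (i, j)" .
qed (use assms in auto)

lemma adjoint_hcat_mult_index:
  assumes "P \<in> carrier_mat n k" "Q \<in> carrier_mat n l" "V \<in> carrier_mat n N" "i < k + l" "c < N"
  shows "(herm (hcat P Q) * V) $$ (i, c) = (if i < k then (herm P * V) $$ (i, c) else (herm Q * V) $$ (i - k, c))"
proof -
  have "(herm (hcat P Q) * V) $$ (i, c) = cinner {..<n} (\<lambda>b. hcat P Q $$ (b, i)) (\<lambda>b. V $$ (b, c))"
    using assms by (intro adjoint_mult_index) auto
  then show ?thesis
    using assms by (auto simp: adjoint_mult_index[where n = n] hcat_index simp del: index_mult_mat(1)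
        intro!: cinner_cong)
qed

lemma adjoint_hcat_mult_eq_0D:
  assumes "P \<in> carrier_mat n k" "Q \<in> carrier_mat n l" "V \<in> carrier_mat n N"
    and "herm (hcat P Q) * V = 0\<^sub>m (k + l) N"
  shows "herm P * V = 0\<^sub>m k N" "herm Q * V = 0\<^sub>m l N"
proof -
  have "(herm P * V) $$ (i, c) = 0" if "i < k" "c < N" for i c
    using adjoint_hcat_mult_index[OF assms(1-3), of i c] assms(4) that by simp
  moreover have "(herm Q * V) $$ (i, c) = 0" if "i < l" "c < N" for i c
    using adjoint_hcat_mult_index[OF assms(1-3), of "k + i" c] assms(4) that by simp
  ultimately show "herm P * V = 0\<^sub>m k N" "herm Q * V = 0\<^sub>m l N"
    using assms(1-3) by (auto intro!: eq_matI simp del: index_mult_mat(1))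
qed

lemma adjoint_mult_hcat_add_orthogonal:
  assumes "Y \<in> carrier_mat n m" "Wc \<in> carrier_mat n K" "P \<in> carrier_mat n N" "V \<in> carrier_mat n N"
    and "herm Y * V = 0\<^sub>m m N"
  shows "herm Y * hcat Wc (P + V) = herm Y * hcat Wc P"
proof -
  have "herm Y * P \<in> carrier_mat m N"
    using mult_carrier_mat[OF mat_adjoint_carrier[OF assms(1)] assms(3)] .
  then have "herm Y * (P + V) = herm Y * P"
    using assms by (simp add: mult_add_distrib_mat[of "herm Y" m n P N V])
  then show ?thesis
    using mult_hcat[OF mat_adjoint_carrier[OF assms(1)] assms(2) add_carrier_mat[OF assms(4)]]
      mult_hcat[OF mat_adjoint_carrier[OF assms(1)] assms(2,3)] by simp
qed

lemma adjoint_mult_mult_eq_0: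
  assumes "X \<in> carrier_mat n d" "T \<in> carrier_mat d N" "V \<in> carrier_mat n N" "herm X * V = 0\<^sub>m d N"
  shows "herm (X * T) * V = 0\<^sub>m N N"
proof -
  have "herm (X * T) * V = herm T * (herm X * V)"
    using assms by (simp add: mat_adjoint_mult[OF assms(1,2)]
        assoc_mult_mat[OF mat_adjoint_carrier[OF assms(2)] mat_adjoint_carrier[OF assms(1)] assms(3)])
  then show ?thesis
    using assms(2,4) by simp
qed

subsection \<open>Orthogonal decomposition and rank\<close>

lemma orthogonal_decomposition_vec:
  fixes X :: "nat \<Rightarrow> nat \<Rightarrow> complex"
  shows "\<exists>t v. (\<forall>b<n. w b = (\<Sum>i<d. t i * X i b) + v b) \<and> (\<forall>i<d. cinner {..<n} (X i) v = 0)"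
proof (induction d arbitrary: w)
  case 0
  show ?case
    by (intro exI[of _ "\<lambda>_. 0"] exI[of _ w]) simp
next
  case (Suc d)
  obtain t v where tv: "\<forall>b<n. w b = (\<Sum>i<d. t i * X i b) + v b" and v: "\<forall>i<d. cinner {..<n} (X i) v = 0"
    using Suc.IH by blast
  obtain s u where su: "\<forall>b<n. X d b = (\<Sum>i<d. s i * X i b) + u b" and u: "\<forall>i<d. cinner {..<n} (X i) u = 0"
    using Suc.IH by blast
  \<comment> \<open>one Gram-Schmidt step: remove from \<open>v\<close> its component along the new direction \<open>u\<close>\<close>
  define k where "k = cinner {..<n} u v / cinner {..<n} u u"
  define v' where "v' b = v b - k * u b" for b
  have "\<forall>b<n. w b = (\<Sum>i<Suc d. (if i < d then t i - k * s i else k) * X i b) + v' b"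
    using tv su by (simp add: v'_def algebra_simps sum_subtractf sum_distrib_left)
  moreover have "cinner {..<n} (X i) v' = 0" if "i < Suc d" for i
  proof (cases "i < d")
    case True
    then show ?thesis
      using u v by (simp add: v'_def[abs_def] cinner_diff_right cinner_mult_right)
  next
    case False
    then have "i = d"
      using that by simp
    have uv': "cinner {..<n} u v' = 0"
    proof (cases "cinner {..<n} u u = 0")
      case True
      then have "\<forall>b\<in>{..<n}. u b = 0"
        using cinner_self_eq_0_iff[of "{..<n}" u] by simp
      then show ?thesis
        by (simp add: cinner_def)
    next
      case False
      have "cinner {..<n} u v' = cinner {..<n} u v - k * cinner {..<n} u u"
        unfolding v'_def[abs_def] by (simp only: cinner_diff_right cinner_mult_right)
      also have "\<dots> = 0"
        using False unfolding k_def by simp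
      finally show ?thesis .
    qed
    have "cinner {..<n} (X d) v' = cinner {..<n} (\<lambda>b. (\<Sum>i<d. s i * X i b) + u b) v'"
      using su by (intro cinner_cong) auto
    also have "\<dots> = 0"
      using u v uv' by (simp add: cinner_add_left cinner_sum_left cinner_mult_left v'_def[abs_def]
          cinner_diff_right cinner_mult_right)
    finally show ?thesis
      using \<open>i = d\<close> by simp
  qed
  ultimately show ?case
    by (intro exI[where x = "\<lambda>i. if i < d then t i - k * s i else k"] exI[where x = v'] conjI) auto
qed

lemma orthogonal_decomposition:
  assumes "X \<in> carrier_mat n d" "S \<in> carrier_mat n N"
  obtains T V where "T \<in> carrier_mat d N" "V \<in> carrier_mat n N" "S = X * T + V" "herm X * V = 0\<^sub>m d N"
proof -
  define P where "P c t v \<longleftrightarrow> (\<forall>b<n. S $$ (b, c) = (\<Sum>i<d. t i * X $$ (b, i)) + v b)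
    \<and> (\<forall>i<d. cinner {..<n} (\<lambda>b. X $$ (b, i)) v = 0)" for c t v
  have "\<forall>c. \<exists>t v. P c t v"
    unfolding P_def by (intro allI orthogonal_decomposition_vec)
  then have "\<exists>t. \<forall>c. \<exists>v. P c (t c) v"
    by (rule choice)
  then obtain t where "\<forall>c. \<exists>v. P c (t c) v"
    by blast
  then have "\<exists>v. \<forall>c. P c (t c) (v c)"
    by (rule choice)
  then obtain v where tv: "\<And>c. P c (t c) (v c)"
    by blast
  let ?T = "mat d N (\<lambda>(i, c). t c i)" and ?V = "mat n N (\<lambda>(b, c). v c b)"
  show thesis
  proof (rule that[of ?T ?V])
    show "S = X * ?T + ?V"
      using assms tv by (intro eq_matI) (auto simp: P_def scalar_prod_def atLeast0LessThan mult.commute)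
    show "herm X * ?V = 0\<^sub>m d N"
    proof (rule eq_matI)
      fix i c assume "i < dim_row (0\<^sub>m d N)" "c < dim_col (0\<^sub>m d N)"
      then have ic: "i < d" "c < N"
        by simp_all
      have "(herm X * ?V) $$ (i, c) = cinner {..<n} (\<lambda>b. X $$ (b, i)) (\<lambda>b. ?V $$ (b, c))"
        using assms ic by (intro adjoint_mult_index) auto
      also have "\<dots> = cinner {..<n} (\<lambda>b. X $$ (b, i)) (v c)"
        using ic by (intro cinner_cong) auto
      finally show "(herm X * ?V) $$ (i, c) = 0\<^sub>m d N $$ (i, c)"
        using tv ic by (simp add: P_def)
    qed (use assms in simp_all)
  qed simp_all
qed

lemma rank_le_sum_of_products:
  fixes f g :: "nat \<Rightarrow> nat \<Rightarrow> 'a :: field"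
  assumes "W \<in> carrier_mat n N" "\<And>b c. b < n \<Longrightarrow> c < N \<Longrightarrow> W $$ (b, c) = (\<Sum>i<d. f i b * g i c)"
  shows "vec_space.rank n W \<le> d"
  using assms
proof (induction d arbitrary: W)
  case 0
  then have "W = 0\<^sub>m n N"
    by (intro eq_matI) auto
  then show ?case
    using vec_space.rank_0I by (metis le_refl)
next
  case (Suc d)
  define W1 where "W1 = mat n N (\<lambda>(b, c). \<Sum>i<d. f i b * g i c)"
  define W2 where "W2 = mat n N (\<lambda>(b, c). f d b * g d c)"
  have W12: "W1 \<in> carrier_mat n N" "W2 \<in> carrier_mat n N"
    by (simp_all add: W1_def W2_def)
  have "W = W1 + W2"
    using Suc.prems by (intro eq_matI) (auto simp: W1_def W2_def)
  moreover have "vec_space.rank n W1 \<le> d"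
    using Suc.IH[OF W12(1)] by (simp add: W1_def)
  moreover have "vec_space.rank n W2 \<le> 1"
    by (rule vec_space.rank_le_1_product_entries[OF W12(2), of "f d" "g d"]) (simp add: W2_def)
  ultimately show ?case
    using vec_space.rank_subadditive[OF W12] by simp
qed

lemma rank_mult_le:
  fixes X :: "'a :: field mat"
  assumes "X \<in> carrier_mat n d" "T \<in> carrier_mat d N"
  shows "vec_space.rank n (X * T) \<le> d"
  using assms
  by (intro rank_le_sum_of_products[where f = "\<lambda>i b. X $$ (b, i)" and g = "\<lambda>i c. T $$ (i, c)"])
     (auto simp: scalar_prod_def atLeast0LessThan)

definition tx_power :: "complex mat \<Rightarrow> complex mat \<Rightarrow> real" where
  "tx_power Wc Ws = Re (mtrace (hcat Wc Ws * herm (hcat Wc Ws)))"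

lemma mtrace_mult_adjoint:
  assumes "P \<in> carrier_mat n N" "Q \<in> carrier_mat n N"
  shows "mtrace (P * herm Q) = (\<Sum>c<N. cinner {..<n} (\<lambda>b. Q $$ (b, c)) (\<lambda>b. P $$ (b, c)))"
  using assms by (simp add: mtrace_def cinner_def scalar_prod_def atLeast0LessThan mult.commute
      sum.swap[of _ "{..<n}"])

lemma Re_mtrace_mult_adjoint_self:
  assumes "S \<in> carrier_mat n N"
  shows "Re (mtrace (S * herm S)) = (\<Sum>c<N. \<Sum>b<n. (cmod (S $$ (b, c)))\<^sup>2)"
  using assms by (simp add: mtrace_mult_adjoint cinner_self Re_sum)

lemma Re_mtrace_mult_adjoint_self_pos:
  assumes "S \<in> carrier_mat n N" "S \<noteq> 0\<^sub>m n N"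
  shows "Re (mtrace (S * herm S)) > 0"
proof -
  obtain b c where "b < n" "c < N" "S $$ (b, c) \<noteq> 0"
  proof (rule ccontr)
    assume "\<not> thesis"
    with that have "S = 0\<^sub>m n N"
      using assms(1) by (intro eq_matI) auto
    with assms(2) show False ..
  qed
  then show ?thesis
    unfolding Re_mtrace_mult_adjoint_self[OF assms(1)]
    by (intro sum_pos2[where i = c] sum_nonneg sum_pos2[where i = b]) auto
qed

lemma mtrace_add:
  "A \<in> carrier_mat n n \<Longrightarrow> B \<in> carrier_mat n n \<Longrightarrow> mtrace (A + B) = mtrace A + mtrace B"
  by (simp add: mtrace_def sum.distrib)

lemma tx_power_eq:
  assumes "Wc \<in> carrier_mat n K" "Ws \<in> carrier_mat n N"
  shows "tx_power Wc Ws = Re (mtrace (Wc * herm Wc)) + Re (mtrace (Ws * herm Ws))"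
  using assms by (simp add: tx_power_def hcat_mult_adjoint mtrace_add[of _ n])

lemma tx_power_smult:
  assumes "Wc \<in> carrier_mat n K" "Ws \<in> carrier_mat n N"
  shows "tx_power (of_real r \<cdot>\<^sub>m Wc) (of_real r \<cdot>\<^sub>m Ws) = r\<^sup>2 * tx_power Wc Ws"
proof -
  have r: "of_real r \<cdot>\<^sub>m Wc \<in> carrier_mat n K" "of_real r \<cdot>\<^sub>m Ws \<in> carrier_mat n N"
    using assms by simp_all
  show ?thesis
    using assms
    by (simp add: tx_power_eq[OF r] tx_power_eq[OF assms] Re_mtrace_mult_adjoint_self[OF r(1)]
        Re_mtrace_mult_adjoint_self[OF r(2)] Re_mtrace_mult_adjoint_self[OF assms(1)]
        Re_mtrace_mult_adjoint_self[OF assms(2)] norm_mult power_mult_distrib sum_distrib_left distrib_left)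
qed

lemma tx_power_orthogonal_less:
  assumes "Wc \<in> carrier_mat n K" "P \<in> carrier_mat n N" "V \<in> carrier_mat n N"
    and "herm P * V = 0\<^sub>m N N" "V \<noteq> 0\<^sub>m n N"
  shows "tx_power Wc P < tx_power Wc (P + V)"
proof -
  have "cinner {..<n} (\<lambda>b. P $$ (b, c)) (\<lambda>b. V $$ (b, c)) = 0" if "c < N" for c
    using adjoint_mult_index[OF assms(2,3) that that] assms(4) that by simp
  then have cross: "cinner {..<n} (\<lambda>b. (P + V) $$ (b, c)) (\<lambda>b. (P + V) $$ (b, c))
      = cinner {..<n} (\<lambda>b. P $$ (b, c)) (\<lambda>b. P $$ (b, c)) + cinner {..<n} (\<lambda>b. V $$ (b, c)) (\<lambda>b. V $$ (b, c))"
    if "c < N" for c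
    using assms that
    by (subst cinner_cong[where u' = "\<lambda>b. P $$ (b, c) + V $$ (b, c)" and v' = "\<lambda>b. P $$ (b, c) + V $$ (b, c)"])
       (auto simp: cinner_add_left cinner_add_right cinner_commute[of _ "\<lambda>b. V $$ (b, c)" "\<lambda>b. P $$ (b, c)"])
  have "mtrace ((P + V) * herm (P + V)) = mtrace (P * herm P) + mtrace (V * herm V)"
    using assms by (simp add: mtrace_mult_adjoint[of _ n N] cross sum.distrib)
  then have "tx_power Wc (P + V) = tx_power Wc P + Re (mtrace (V * herm V))"
    using assms by (simp add: tx_power_eq[of _ n K _ N])
  then show ?thesis
    using Re_mtrace_mult_adjoint_self_pos[OF assms(3,5)] by simp
qed

lemma feasible_smult_exists:
  assumes "Wc \<in> carrier_mat Nt K" "Ws \<in> carrier_mat Nt Ns" "tx_power Wc Ws < Pt"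
  obtains r where "r > 1" "feasible Nt K Ns Pt (of_real r \<cdot>\<^sub>m Wc) (of_real r \<cdot>\<^sub>m Ws)"
proof -
  let ?P = "tx_power Wc Ws"
  have "?P \<ge> 0"
    using assms by (simp add: tx_power_eq[of _ Nt K _ Ns] Re_mtrace_mult_adjoint_self[of _ Nt] sum_nonneg)
  define r where "r = (if ?P = 0 then 2 else sqrt (Pt / ?P))"
  have "r > 1" "r\<^sup>2 * ?P \<le> Pt"
    using assms \<open>?P \<ge> 0\<close> by (auto simp: r_def)
  moreover have "feasible Nt K Ns Pt (of_real r \<cdot>\<^sub>m Wc) (of_real r \<cdot>\<^sub>m Ws) \<longleftrightarrow> r\<^sup>2 * ?P \<le> Pt"
    using assms tx_power_smult[OF assms(1,2), of r] by (simp add: feasible_def tx_power_def)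
  ultimately show ?thesis
    using that by blast
qed

subsection \<open>Inverses and traces of Gram matrices\<close>

lemma mat_inv_eqI:
  assumes "F \<in> carrier_mat n n" "B \<in> carrier_mat n n" "F * B = 1\<^sub>m n" "B * F = 1\<^sub>m n"
  shows "mat_inv F = B"
  unfolding mat_inv_def
proof (rule the_equality)
  fix B' assume "B' \<in> carrier_mat (dim_row F) (dim_row F) \<and> F * B' = 1\<^sub>m (dim_row F) \<and> B' * F = 1\<^sub>m (dim_row F)"
  then have B': "B' \<in> carrier_mat n n" "B' * F = 1\<^sub>m n"
    using assms(1) by auto
  have "B' = B' * (F * B)"
    using assms(3) B'(1) by simp
  also have "\<dots> = (B' * F) * B"
    using assms(1,2) B'(1) by (simp add: assoc_mult_mat[of B' n n F n B n])
  finally show "B' = B"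
    using assms(2) B'(2) by simp
qed (use assms in simp)

lemma mat_inv_correct:
  assumes "F \<in> carrier_mat n n" "invertible_mat F"
  shows "mat_inv F \<in> carrier_mat n n" "F * mat_inv F = 1\<^sub>m n" "mat_inv F * F = 1\<^sub>m n"
proof -
  obtain B where FB: "F * B = 1\<^sub>m (dim_row F)" and BF: "B * F = 1\<^sub>m (dim_row B)"
    using assms(2) unfolding invertible_mat_def inverts_mat_def by blast
  then have B: "B \<in> carrier_mat n n"
    using assms(1) by (metis carrier_matD carrier_matI index_mult_mat(2,3) index_one_mat(2,3))
  then have "mat_inv F = B"
    using assms(1) FB BF by (intro mat_inv_eqI) auto
  then show "mat_inv F \<in> carrier_mat n n" "F * mat_inv F = 1\<^sub>m n" "mat_inv F * F = 1\<^sub>m n"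
    using assms(1) B FB BF by auto
qed

lemma mat_inv_smult:
  fixes F :: "real mat"
  assumes "F \<in> carrier_mat n n" "invertible_mat F" "c \<noteq> 0"
  shows "invertible_mat (c \<cdot>\<^sub>m F)" "mat_inv (c \<cdot>\<^sub>m F) = (1 / c) \<cdot>\<^sub>m mat_inv F"
proof -
  note inv = mat_inv_correct[OF assms(1,2)]
  have "(c \<cdot>\<^sub>m F) * ((1 / c) \<cdot>\<^sub>m mat_inv F) = c \<cdot>\<^sub>m ((1 / c) \<cdot>\<^sub>m (F * mat_inv F))"
    using mult_smult_assoc_mat[OF assms(1), of "(1 / c) \<cdot>\<^sub>m mat_inv F" n c]
      mult_smult_distrib[OF assms(1) inv(1), of "1 / c"] inv(1) by simp
  then have left: "(c \<cdot>\<^sub>m F) * ((1 / c) \<cdot>\<^sub>m mat_inv F) = 1\<^sub>m n"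
    using assms(3) inv(2) by (auto intro!: eq_matI)
  have "((1 / c) \<cdot>\<^sub>m mat_inv F) * (c \<cdot>\<^sub>m F) = (1 / c) \<cdot>\<^sub>m (c \<cdot>\<^sub>m (mat_inv F * F))"
    using mult_smult_assoc_mat[OF inv(1), of "c \<cdot>\<^sub>m F" n "1 / c"]
      mult_smult_distrib[OF inv(1) assms(1), of c] assms(1) by simp
  then have right: "((1 / c) \<cdot>\<^sub>m mat_inv F) * (c \<cdot>\<^sub>m F) = 1\<^sub>m n"
    using assms(3) inv(3) by (auto intro!: eq_matI)
  show "invertible_mat (c \<cdot>\<^sub>m F)"
    unfolding invertible_mat_def inverts_mat_def using assms(1) inv left right
    by (intro conjI exI[of _ "(1 / c) \<cdot>\<^sub>m mat_inv F"]) auto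
  show "mat_inv (c \<cdot>\<^sub>m F) = (1 / c) \<cdot>\<^sub>m mat_inv F"
    using assms(1) inv left right by (intro mat_inv_eqI) auto
qed

lemma mtrace_smult:
  fixes A :: "'a :: semiring_0 mat"
  shows "A \<in> carrier_mat n n \<Longrightarrow> mtrace (c \<cdot>\<^sub>m A) = c * mtrace A"
  by (auto simp: mtrace_def sum_distrib_left intro!: sum.cong)

lemma mtrace_mat_inv_smult_less:
  fixes F :: "real mat"
  assumes "F \<in> carrier_mat n n" "invertible_mat F" "mtrace (mat_inv F) > 0" "c > 1"
  shows "mtrace (mat_inv (c \<cdot>\<^sub>m F)) < mtrace (mat_inv F)"
  using assms mat_inv_correct(1)[OF assms(1,2)]
  by (simp add: mat_inv_smult mtrace_smult[of _ n] field_simps)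

lemma Gram_mult_vec:
  assumes "\<And>k. k < n \<Longrightarrow> F $$ (l, k) = c * Re (cinner S (g l) (g k))"
  shows "(\<Sum>k<n. F $$ (l, k) * y k) = c * Re (cinner S (g l) (\<lambda>x. \<Sum>k<n. of_real (y k) * g k x))"
  using assms by (simp add: cinner_sum_right cinner_mult_right Re_sum sum_distrib_left algebra_simps)

lemma inverse_Gram_diag_pos:
  fixes F B :: "real mat"
  assumes "finite S" "c > 0"
    and Gram: "\<And>k l. k < n \<Longrightarrow> l < n \<Longrightarrow> F $$ (k, l) = c * Re (cinner S (g k) (g l))"
    and "F \<in> carrier_mat n n" "B \<in> carrier_mat n n" "F * B = 1\<^sub>m n" "t < n"
  shows "B $$ (t, t) > 0"
proof -
  \<comment> \<open>\<open>B\<^sub>t\<^sub>t = y\<^sup>T F y = c \<parallel>h\<parallel>\<^sup>2\<close> for the \<open>t\<close>-th column \<open>y\<close> of \<open>B\<close>, and \<open>h \<noteq> 0\<close> since \<open>F y \<noteq> 0\<close>\<close>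
  define h where "h x = (\<Sum>k<n. of_real (B $$ (k, t)) * g k x)" for x
  have Fy: "c * Re (cinner S (g l) h) = (if l = t then 1 else 0)" if "l < n" for l
  proof -
    have "(F * B) $$ (l, t) = (\<Sum>k<n. F $$ (l, k) * B $$ (k, t))"
      using assms(4,5,7) that by (simp add: scalar_prod_def atLeast0LessThan)
    also have "\<dots> = c * Re (cinner S (g l) h)"
      unfolding h_def[abs_def] by (rule Gram_mult_vec) (use Gram that in auto)
    finally show ?thesis
      using assms(6,7) that by simp
  qed
  have "B $$ (t, t) = (\<Sum>l<n. B $$ (l, t) * (c * Re (cinner S (g l) h)))"
    using \<open>t < n\<close> by (simp add: Fy if_distrib[of "\<lambda>x. _ * x"] cong: if_cong)
  also have "\<dots> = c * Re (cinner S h h)"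
    by (simp add: h_def[abs_def] cinner_sum_left cinner_mult_left Re_sum sum_distrib_left mult.left_commute)
  finally have Btt: "B $$ (t, t) = c * (\<Sum>x\<in>S. (cmod (h x))\<^sup>2)"
    by (simp add: cinner_self)
  have "\<not> (\<forall>x\<in>S. h x = 0)"
  proof
    assume "\<forall>x\<in>S. h x = 0"
    then have "cinner S (g t) h = 0"
      by (simp add: cinner_def)
    then show False
      using Fy[OF \<open>t < n\<close>] by simp
  qed
  then obtain x where "x \<in> S" "h x \<noteq> 0"
    by blast
  then have "(\<Sum>x\<in>S. (cmod (h x))\<^sup>2) > 0"
    using \<open>finite S\<close> by (intro sum_pos2[where i = x]) auto
  with Btt \<open>c > 0\<close> show ?thesis
    by simp
qed

lemma mtrace_inverse_Gram_pos:
  fixes F :: "real mat"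
  assumes "finite S" "c > 0" "n > 0"
    and "\<And>k l. k < n \<Longrightarrow> l < n \<Longrightarrow> F $$ (k, l) = c * Re (cinner S (g k) (g l))"
    and "F \<in> carrier_mat n n" "invertible_mat F"
  shows "mtrace (mat_inv F) > 0"
proof -
  note inv = mat_inv_correct[OF assms(5,6)]
  have "mtrace (mat_inv F) = (\<Sum>t<n. mat_inv F $$ (t, t))"
    using inv by (simp add: mtrace_def)
  also have "\<dots> > 0"
    using assms inv by (intro sum_pos inverse_Gram_diag_pos[where F = F and S = S]) auto
  finally show ?thesis .
qed

subsection \<open>The Fisher information matrix as a Gram matrix\<close>

lemma hadamard_index [simp]:
  "i < dim_row A \<Longrightarrow> j < dim_col A \<Longrightarrow> (A \<odot> B) $$ (i, j) = A $$ (i, j) * B $$ (i, j)"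
  by (simp add: hadamard_def)

lemma hadamard_dim [simp]: "dim_row (A \<odot> B) = dim_row A" "dim_col (A \<odot> B) = dim_col A"
  by (simp_all add: hadamard_def)

lemma diag_alpha_dim [simp]: "dim_row (diag_alpha M al) = M" "dim_col (diag_alpha M al) = M"
  by (simp_all add: diag_alpha_def)

lemma diag_alpha_carrier [simp]: "diag_alpha M al \<in> carrier_mat M M"
  by (simp add: carrier_matI)

lemma diag_alpha_mult_index:
  assumes "H \<in> carrier_mat M N" "j < M" "i < N"
  shows "(diag_alpha M al * H) $$ (j, i) = al j * H $$ (j, i)"
  using assms by (simp add: diag_alpha_def scalar_prod_def if_distrib[of "\<lambda>x. x * _"] cong: if_cong)

lemma mult_adjoint_diag_alpha_index:
  assumes "H \<in> carrier_mat N M" "j < N" "i < M"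
  shows "(H * herm (diag_alpha M al)) $$ (j, i) = H $$ (j, i) * cnj (al i)"
  using assms by (simp add: diag_alpha_def scalar_prod_def if_distrib[of cnj] if_distrib[of "\<lambda>x. _ * x"] cong: if_cong)

lemma tq_dim [simp]: "dim_row (tq U X R Y) = dim_row U" "dim_col (tq U X R Y) = dim_row U"
  by (simp_all add: tq_def)

lemma Fpq_dim [simp]:
  "dim_row (Fpq U R A X1 X2 B Y1 Y2) = dim_row U" "dim_col (Fpq U R A X1 X2 B Y1 Y2) = dim_row U"
  by (simp_all add: Fpq_def)

lemma Fp3_dim [simp]: "dim_row (Fp3 U R A X B Y) = dim_row U" "dim_col (Fp3 U R A X B Y) = dim_col A"
  by (simp_all add: Fp3_def)

lemma F33_dim [simp]: "dim_row (F33 R A B) = dim_col A" "dim_col (F33 R A B) = dim_col A"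
  by (simp_all add: F33_def)

lemma tq_diag_alpha_index:
  assumes "X \<in> carrier_mat n M" "R \<in> carrier_mat n n" "Y \<in> carrier_mat n M" "i < M" "j < M"
  shows "tq (diag_alpha M al) X R Y $$ (i, j) = al j * (herm X * R * Y) $$ (j, i) * cnj (al i)"
proof -
  let ?U = "diag_alpha M al" and ?H = "herm X * R * Y"
  have H: "?H \<in> carrier_mat M M"
    using assms by auto
  have "?U * herm X * R = ?U * (herm X * R)"
    using assms by (intro assoc_mult_mat) auto
  moreover have "?U * (herm X * R) * Y = ?U * ?H"
    using assms by (intro assoc_mult_mat) auto
  ultimately have "tq ?U X R Y $$ (i, j) = (?U * ?H * herm ?U) $$ (j, i)"
    using assms by (simp add: tq_def)
  also have "\<dots> = (?U * ?H) $$ (j, i) * cnj (al i)"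
    by (rule mult_adjoint_diag_alpha_index[OF mult_carrier_mat[OF diag_alpha_carrier H] assms(5,4)])
  also have "\<dots> = al j * ?H $$ (j, i) * cnj (al i)"
    using assms H by (simp add: diag_alpha_mult_index del: index_mult_mat(1))
  finally show ?thesis .
qed

lemma transpose_mult_adjoint_diag_alpha_index:
  assumes "H \<in> carrier_mat M M" "i < M" "j < M"
  shows "transpose_mat (H * herm (diag_alpha M al)) $$ (i, j) = H $$ (j, i) * cnj (al i)"
proof -
  have "transpose_mat (H * herm (diag_alpha M al)) $$ (i, j) = (H * herm (diag_alpha M al)) $$ (j, i)"
    using assms by (intro index_transpose_mat(1)) auto
  also have "\<dots> = H $$ (j, i) * cnj (al i)"
    by (rule mult_adjoint_diag_alpha_index[OF assms(1) assms(3) assms(2)])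
  finally show ?thesis .
qed

text \<open>The noiseless echo of target \<open>i\<close> at receive antenna \<open>r\<close> for the column \<open>c\<close> of \<open>W\<close> is
  \<open>\<alpha>\<^sub>i B\<^sub>r\<^sub>i (A\<^sup>H W)\<^sub>i\<^sub>c\<close>. Its partial derivatives in \<open>\<theta>\<^sub>i\<close> (or \<open>\<phi>\<^sub>i\<close>) and in \<open>Re \<alpha>\<^sub>i\<close> are
  the following vectors, where \<open>X\<close> and \<open>Y\<close> are the corresponding derivatives of \<open>A\<close> and \<open>B\<close>;
  the derivative in \<open>Im \<alpha>\<^sub>i\<close> is \<open>\<i>\<close> times the one in \<open>Re \<alpha>\<^sub>i\<close>.\<close>

definition echo_angle_deriv :: "(nat \<Rightarrow> complex) \<Rightarrow> complex mat \<Rightarrow> complex mat \<Rightarrow> complex mat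
    \<Rightarrow> complex mat \<Rightarrow> complex mat \<Rightarrow> nat \<Rightarrow> nat \<times> nat \<Rightarrow> complex" where
  "echo_angle_deriv al W A X B Y i =
     (\<lambda>x. al i * (tensor (\<lambda>r. Y $$ (r, i)) (\<lambda>c. (herm A * W) $$ (i, c)) x
                + tensor (\<lambda>r. B $$ (r, i)) (\<lambda>c. (herm X * W) $$ (i, c)) x))"

definition echo_gain_deriv :: "complex mat \<Rightarrow> complex mat \<Rightarrow> complex mat \<Rightarrow> nat \<Rightarrow> nat \<times> nat \<Rightarrow> complex" where
  "echo_gain_deriv W A B i = tensor (\<lambda>r. B $$ (r, i)) (\<lambda>c. (herm A * W) $$ (i, c))"

lemma Fpq_eq_cinner:
  assumes A: "A \<in> carrier_mat n M" and X1: "X1 \<in> carrier_mat n M" and X2: "X2 \<in> carrier_mat n M"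
    and B: "B \<in> carrier_mat nr M" and Y1: "Y1 \<in> carrier_mat nr M" and Y2: "Y2 \<in> carrier_mat nr M"
    and W: "W \<in> carrier_mat n N" and "i < M" "j < M"
  shows "Fpq (diag_alpha M al) (W * herm W) A X1 X2 B Y1 Y2 $$ (i, j)
       = cinner ({..<nr} \<times> {..<N}) (echo_angle_deriv al W A X1 B Y1 i) (echo_angle_deriv al W A X2 B Y2 j)"
proof -
  let ?U = "diag_alpha M al" and ?R = "W * herm W"
  have R: "?R \<in> carrier_mat n n"
    using W by simp
  have "Fpq ?U ?R A X1 X2 B Y1 Y2 $$ (i, j)
      = tq ?U A ?R A $$ (i, j) * (herm Y1 * Y2) $$ (i, j) + tq ?U A ?R X1 $$ (i, j) * (herm B * Y2) $$ (i, j)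
      + tq ?U X2 ?R A $$ (i, j) * (herm Y1 * B) $$ (i, j) + tq ?U X2 ?R X1 $$ (i, j) * (herm B * B) $$ (i, j)"
    using assms by (simp add: Fpq_def del: index_mult_mat(1))
  also have "\<dots> = cinner ({..<nr} \<times> {..<N}) (echo_angle_deriv al W A X1 B Y1 i) (echo_angle_deriv al W A X2 B Y2 j)"
    using assms A X1 X2 B Y1 Y2 W R
    by (simp add: echo_angle_deriv_def cinner_add_left cinner_add_right cinner_mult_left cinner_mult_right
        cinner_tensor tq_diag_alpha_index sandwich_index adjoint_mult_index algebra_simps
        del: index_mult_mat(1))
  finally show ?thesis .
qed

lemma Fp3_eq_cinner:
  assumes A: "A \<in> carrier_mat n M" and X1: "X1 \<in> carrier_mat n M"
    and B: "B \<in> carrier_mat nr M" and Y1: "Y1 \<in> carrier_mat nr M"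
    and W: "W \<in> carrier_mat n N" and "i < M" "j < M"
  shows "Fp3 (diag_alpha M al) (W * herm W) A X1 B Y1 $$ (i, j)
       = cinner ({..<nr} \<times> {..<N}) (echo_angle_deriv al W A X1 B Y1 i) (echo_gain_deriv W A B j)"
proof -
  let ?U = "diag_alpha M al" and ?R = "W * herm W"
  have R: "?R \<in> carrier_mat n n"
    using W by simp
  have H: "herm A * ?R * A \<in> carrier_mat M M" "herm A * ?R * X1 \<in> carrier_mat M M"
    using mult_carrier_mat[OF mult_carrier_mat[OF mat_adjoint_carrier[OF A] R]] A X1 by blast+
  have "Fp3 ?U ?R A X1 B Y1 $$ (i, j)
      = transpose_mat (herm A * ?R * A * herm ?U) $$ (i, j) * (herm Y1 * B) $$ (i, j)
      + transpose_mat (herm A * ?R * X1 * herm ?U) $$ (i, j) * (herm B * B) $$ (i, j)"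
    using assms by (simp add: Fp3_def del: index_mult_mat(1) index_transpose_mat(1))
  also have "\<dots> = cinner ({..<nr} \<times> {..<N}) (echo_angle_deriv al W A X1 B Y1 i) (echo_gain_deriv W A B j)"
    using assms A X1 B Y1 W
    by (simp add: echo_angle_deriv_def echo_gain_deriv_def cinner_add_left cinner_mult_left cinner_tensor
        transpose_mult_adjoint_diag_alpha_index[OF H(1)] transpose_mult_adjoint_diag_alpha_index[OF H(2)]
        sandwich_index adjoint_mult_index algebra_simps
        del: index_mult_mat(1) index_transpose_mat(1))
  finally show ?thesis .
qed

lemma F33_eq_cinner:
  assumes A: "A \<in> carrier_mat n M" and B: "B \<in> carrier_mat nr M" and W: "W \<in> carrier_mat n N"
    and "i < M" "j < M"
  shows "F33 (W * herm W) A B $$ (i, j)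
       = cinner ({..<nr} \<times> {..<N}) (echo_gain_deriv W A B i) (echo_gain_deriv W A B j)"
proof -
  have "F33 (W * herm W) A B $$ (i, j) = (herm A * (W * herm W) * A) $$ (j, i) * (herm B * B) $$ (i, j)"
    using assms by (simp add: F33_def del: index_mult_mat(1))
  also have "\<dots> = cinner ({..<nr} \<times> {..<N}) (echo_gain_deriv W A B i) (echo_gain_deriv W A B j)"
    using assms A B W
    by (simp add: echo_gain_deriv_def cinner_tensor sandwich_index adjoint_mult_index
        mult.commute del: index_mult_mat(1))
  finally show ?thesis .
qed

definition echo_derivs :: "(nat \<Rightarrow> complex) \<Rightarrow> complex mat \<Rightarrow> complex mat \<Rightarrow> complex mat \<Rightarrow> complex mat
    \<Rightarrow> complex mat \<Rightarrow> complex mat \<Rightarrow> complex mat \<Rightarrow> nat \<Rightarrow> nat \<Rightarrow> nat \<times> nat \<Rightarrow> complex" where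
  "echo_derivs al W A At Ap B Bt Bp p =
     [echo_angle_deriv al W A At B Bt, echo_angle_deriv al W A Ap B Bp, echo_gain_deriv W A B,
      \<lambda>i x. \<i> * echo_gain_deriv W A B i x] ! p"

lemma echo_derivs_smult:
  assumes "A \<in> carrier_mat n M" "At \<in> carrier_mat n M" "Ap \<in> carrier_mat n M" "W \<in> carrier_mat n N"
    and proj: "\<And>X. X \<in> {A, At, Ap} \<Longrightarrow> herm X * W' = s \<cdot>\<^sub>m (herm X * W)"
    and "p < 4" "i < M" "c < N"
  shows "echo_derivs al W' A At Ap B Bt Bp p i (r, c) = s * echo_derivs al W A At Ap B Bt Bp p i (r, c)"
proof -
  have P: "(herm X * W') $$ (i, c) = s * (herm X * W) $$ (i, c)" if "X \<in> {A, At, Ap}" for X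
    using proj[OF that] that assms by (auto simp del: index_mult_mat(1))
  have "p \<in> {0, 1, 2, 3}"
    using \<open>p < 4\<close> by auto
  then show ?thesis
    by (auto simp: echo_derivs_def echo_angle_deriv_def echo_gain_deriv_def tensor_def P algebra_simps
        simp del: index_mult_mat(1))
qed

lemma re_mat_index [simp]: "i < dim_row X \<Longrightarrow> j < dim_col X \<Longrightarrow> re_mat X $$ (i, j) = Re (X $$ (i, j))"
  by (simp add: re_mat_def)

lemma im_mat_index [simp]: "i < dim_row X \<Longrightarrow> j < dim_col X \<Longrightarrow> im_mat X $$ (i, j) = Im (X $$ (i, j))"
  by (simp add: im_mat_def)

lemma re_im_mat_dim [simp]:
  "dim_row (re_mat X) = dim_row X" "dim_col (re_mat X) = dim_col X"
  "dim_row (im_mat X) = dim_row X" "dim_col (im_mat X) = dim_col X"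
  by (simp_all add: re_mat_def im_mat_def)

lemma block4_index:
  "k < 4 * M \<Longrightarrow> l < 4 * M \<Longrightarrow> block4 M blk $$ (k, l) = blk (k div M) (l div M) $$ (k mod M, l mod M)"
  by (simp add: block4_def)

lemma block4_dim [simp]: "dim_row (block4 M blk) = 4 * M" "dim_col (block4 M blk) = 4 * M"
  by (simp_all add: block4_def)

lemma smult_block4_FIM_blocks_index_Gram:
  fixes g :: "nat \<Rightarrow> nat \<Rightarrow> 'a \<Rightarrow> complex"
  assumes carrier: "G11 \<in> carrier_mat M M" "G12 \<in> carrier_mat M M" "G13 \<in> carrier_mat M M"
      "G22 \<in> carrier_mat M M" "G23 \<in> carrier_mat M M" "G33 \<in> carrier_mat M M"
    and Gram: "\<And>i j. i < M \<Longrightarrow> j < M \<Longrightarrow>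
        G11 $$ (i, j) = cinner S (g 0 i) (g 0 j) \<and> G12 $$ (i, j) = cinner S (g 0 i) (g 1 j) \<and>
        G13 $$ (i, j) = cinner S (g 0 i) (g 2 j) \<and> G22 $$ (i, j) = cinner S (g 1 i) (g 1 j) \<and>
        G23 $$ (i, j) = cinner S (g 1 i) (g 2 j) \<and> G33 $$ (i, j) = cinner S (g 2 i) (g 2 j)"
    and g3: "g 3 = (\<lambda>i x. \<i> * g 2 i x)"
    and "k < 4 * M" "l < 4 * M"
  shows "(c \<cdot>\<^sub>m block4 M (FIM_blocks G11 G12 G13 G22 G23 G33)) $$ (k, l)
       = c * Re (cinner S (g (k div M) (k mod M)) (g (l div M) (l mod M)))"
proof -
  define p q i j where "p = k div M" "q = l div M" "i = k mod M" "j = l mod M"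
  have "M > 0"
    using \<open>k < 4 * M\<close> by simp
  then have "p < 4" "q < 4" "i < M" "j < M"
    using \<open>k < 4 * M\<close> \<open>l < 4 * M\<close> by (simp_all add: p_q_i_j_def less_mult_imp_div_less mult.commute)
  note ij = Gram[OF \<open>i < M\<close> \<open>j < M\<close>]
  have ji: "G12 $$ (j, i) = cnj (cinner S (g 1 i) (g 0 j))" "G13 $$ (j, i) = cnj (cinner S (g 2 i) (g 0 j))"
    "G23 $$ (j, i) = cnj (cinner S (g 2 i) (g 1 j))" "G33 $$ (j, i) = cnj (cinner S (g 2 i) (g 2 j))"
    using Gram[OF \<open>j < M\<close> \<open>i < M\<close>] by (simp_all add: cinner_commute[of S "g _ j"])
  have "p \<in> {0, 1, 2, 3}" "q \<in> {0, 1, 2, 3}"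
    using \<open>p < 4\<close> \<open>q < 4\<close> by auto
  then have "FIM_blocks G11 G12 G13 G22 G23 G33 p q $$ (i, j) = Re (cinner S (g p i) (g q j))"
    using carrier \<open>i < M\<close> \<open>j < M\<close>
    by (auto simp: FIM_blocks_def ij ji g3 cinner_mult_left cinner_mult_right)
  then show ?thesis
    using \<open>k < 4 * M\<close> \<open>l < 4 * M\<close> by (simp add: block4_index p_q_i_j_def)
qed

lemma steer_carrier [simp]:
  "steer N M a th ph \<in> carrier_mat N M" "steer_dth N M a th ph \<in> carrier_mat N M"
  "steer_dph N M a th ph \<in> carrier_mat N M"
  by (simp_all add: steer_def steer_dth_def steer_dph_def)

lemma steer_dim [simp]: "dim_col (steer N M a th ph) = M"
  by (simp add: steer_def)

context
  fixes Nt Nr M L :: nat and sigma2 :: real and a b :: "real \<Rightarrow> real \<Rightarrow> nat \<Rightarrow> complex"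
    and th ph :: "nat \<Rightarrow> real" and al :: "nat \<Rightarrow> complex"
begin

abbreviation fim :: "complex mat \<Rightarrow> complex mat \<Rightarrow> real mat" where
  "fim \<equiv> FIM Nt Nr M L sigma2 a b th ph al"

abbreviation tx_steering_block :: "complex mat" where
  "tx_steering_block \<equiv> hcat (steer Nt M a th ph) (hcat (steer_dth Nt M a th ph) (steer_dph Nt M a th ph))"

abbreviation derivs :: "complex mat \<Rightarrow> nat \<Rightarrow> nat \<Rightarrow> nat \<times> nat \<Rightarrow> complex" where
  "derivs W \<equiv> echo_derivs al W (steer Nt M a th ph) (steer_dth Nt M a th ph) (steer_dph Nt M a th ph)
      (steer Nr M b th ph) (steer_dth Nr M b th ph) (steer_dph Nr M b th ph)"

lemma FIM_dim [simp]: "dim_row (fim Wc Ws) = 4 * M" "dim_col (fim Wc Ws) = 4 * M"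
  by (simp_all add: FIM_def Let_def)

lemma FIM_carrier: "fim Wc Ws \<in> carrier_mat (4 * M) (4 * M)"
  by (simp add: carrier_matI)

lemma FIM_index_Gram:
  assumes "Wc \<in> carrier_mat Nt K" "Ws \<in> carrier_mat Nt Ns" "k < 4 * M" "l < 4 * M"
  shows "fim Wc Ws $$ (k, l) = 2 * real L / sigma2 *
    Re (cinner ({..<Nr} \<times> {..<K + Ns}) (derivs (hcat Wc Ws) (k div M) (k mod M))
                                         (derivs (hcat Wc Ws) (l div M) (l mod M)))"
proof -
  have W: "hcat Wc Ws \<in> carrier_mat Nt (K + Ns)"
    using assms by simp
  show ?thesis
    unfolding FIM_def Let_def hcat_mult_adjoint[OF assms(1,2), symmetric]
    by (rule smult_block4_FIM_blocks_index_Gram[where g = "derivs (hcat Wc Ws)"],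
        simp_all add: carrier_matI echo_derivs_def assms(3,4),
        intro conjI Fpq_eq_cinner[where n = Nt and N = "K + Ns"]
          Fp3_eq_cinner[where n = Nt and N = "K + Ns"] F33_eq_cinner[where n = Nt and N = "K + Ns"])
       (simp_all add: W)
qed

lemma FIM_smult_if_projections_smult:
  assumes "Wc \<in> carrier_mat Nt K" "Ws \<in> carrier_mat Nt Ns" "Wc' \<in> carrier_mat Nt K" "Ws' \<in> carrier_mat Nt Ns"
    and proj: "\<And>X. X \<in> {steer Nt M a th ph, steer_dth Nt M a th ph, steer_dph Nt M a th ph} \<Longrightarrow>
      herm X * hcat Wc' Ws' = of_real \<kappa> \<cdot>\<^sub>m (herm X * hcat Wc Ws)"
  shows "fim Wc' Ws' = \<kappa>\<^sup>2 \<cdot>\<^sub>m fim Wc Ws"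
proof (rule eq_matI)
  fix k l assume "k < dim_row (\<kappa>\<^sup>2 \<cdot>\<^sub>m fim Wc Ws)" "l < dim_col (\<kappa>\<^sup>2 \<cdot>\<^sub>m fim Wc Ws)"
  then have kl: "k < 4 * M" "l < 4 * M"
    by simp_all
  then have "M > 0" by auto
  let ?S = "{..<Nr} \<times> {..<K + Ns}"
  have scale: "derivs (hcat Wc' Ws') p i x = of_real \<kappa> * derivs (hcat Wc Ws) p i x"
    if "p < 4" "i < M" "x \<in> ?S" for p i x
  proof -
    obtain r c where x: "x = (r, c)" "c < K + Ns"
      using \<open>x \<in> ?S\<close> by auto
    show ?thesis
      unfolding x(1) using that x assms
      by (intro echo_derivs_smult[where n = Nt and N = "K + Ns"]) simp_all
  qed
  have "cinner ?S (derivs (hcat Wc' Ws') (k div M) (k mod M)) (derivs (hcat Wc' Ws') (l div M) (l mod M))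
      = cinner ?S (\<lambda>x. of_real \<kappa> * derivs (hcat Wc Ws) (k div M) (k mod M) x)
                  (\<lambda>x. of_real \<kappa> * derivs (hcat Wc Ws) (l div M) (l mod M) x)"
    using kl \<open>M > 0\<close> by (intro cinner_cong scale) (simp_all add: less_mult_imp_div_less mult.commute)
  also have "\<dots> = of_real (\<kappa>\<^sup>2) * cinner ?S (derivs (hcat Wc Ws) (k div M) (k mod M))
                                            (derivs (hcat Wc Ws) (l div M) (l mod M))"
    by (simp add: cinner_mult_left cinner_mult_right power2_eq_square)
  finally show "fim Wc' Ws' $$ (k, l) = (\<kappa>\<^sup>2 \<cdot>\<^sub>m fim Wc Ws) $$ (k, l)"
    using kl assms by (simp add: FIM_index_Gram)
qed simp_all

lemma FIM_mtrace_inverse_pos: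
  assumes "Wc \<in> carrier_mat Nt K" "Ws \<in> carrier_mat Nt Ns" "M > 0" "L > 0" "sigma2 > 0"
    and "invertible_mat (fim Wc Ws)"
  shows "mtrace (mat_inv (fim Wc Ws)) > 0"
  using assms
  by (intro mtrace_inverse_Gram_pos[where n = "4 * M" and S = "{..<Nr} \<times> {..<K + Ns}" and c = "2 * real L / sigma2"
        and g = "\<lambda>k. derivs (hcat Wc Ws) (k div M) (k mod M)"])
     (simp_all add: FIM_index_Gram FIM_carrier)

definition CRLB_optimal :: "nat \<Rightarrow> nat \<Rightarrow> real \<Rightarrow> real \<Rightarrow> complex mat \<Rightarrow> complex mat \<Rightarrow> bool" where
  "CRLB_optimal K Ns Pt delta_s Wc Ws \<longleftrightarrow>
     feasible Nt K Ns Pt Wc Ws \<and> invertible_mat (fim Wc Ws) \<and>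
     (\<forall>Wc' Ws'. feasible Nt K Ns Pt Wc' Ws' \<longrightarrow> invertible_mat (fim Wc' Ws') \<longrightarrow>
        - delta_s * mtrace (mat_inv (fim Wc' Ws')) \<le> - delta_s * mtrace (mat_inv (fim Wc Ws)))"

lemma CRLB_optimal_power_tight:
  assumes opt: "CRLB_optimal K Ns Pt delta_s Wc0 Ws0"
    and "M > 0" "L > 0" "sigma2 > 0" "delta_s > 0"
    and Wc: "Wc \<in> carrier_mat Nt K" and Ws: "Ws \<in> carrier_mat Nt Ns"
    and proj: "\<And>X. X \<in> {steer Nt M a th ph, steer_dth Nt M a th ph, steer_dph Nt M a th ph} \<Longrightarrow>
      herm X * hcat Wc Ws = herm X * hcat Wc0 Ws0"
  shows "Pt \<le> tx_power Wc Ws"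
proof (rule ccontr)
  assume "\<not> Pt \<le> tx_power Wc Ws"
  then have "tx_power Wc Ws < Pt"
    by simp
  then obtain r where "r > 1" and feasible: "feasible Nt K Ns Pt (of_real r \<cdot>\<^sub>m Wc) (of_real r \<cdot>\<^sub>m Ws)"
    by (rule feasible_smult_exists[OF Wc Ws])
  have Wc0: "Wc0 \<in> carrier_mat Nt K" and Ws0: "Ws0 \<in> carrier_mat Nt Ns"
    and inv0: "invertible_mat (fim Wc0 Ws0)"
    using opt by (simp_all add: CRLB_optimal_def feasible_def)
  have "fim (of_real r \<cdot>\<^sub>m Wc) (of_real r \<cdot>\<^sub>m Ws) = r\<^sup>2 \<cdot>\<^sub>m fim Wc0 Ws0"
  proof (rule FIM_smult_if_projections_smult[OF Wc0 Ws0])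
    fix X assume X: "X \<in> {steer Nt M a th ph, steer_dth Nt M a th ph, steer_dph Nt M a th ph}"
    then have "herm X * hcat (of_real r \<cdot>\<^sub>m Wc) (of_real r \<cdot>\<^sub>m Ws) = of_real r \<cdot>\<^sub>m (herm X * hcat Wc Ws)"
      using Wc Ws by (auto simp: hcat_smult[of _ Nt K] mult_smult_distrib[of _ M Nt _ "K + Ns"])
    then show "herm X * hcat (of_real r \<cdot>\<^sub>m Wc) (of_real r \<cdot>\<^sub>m Ws) = of_real r \<cdot>\<^sub>m (herm X * hcat Wc0 Ws0)"
      using proj[OF X] by simp
  qed (use Wc Ws in simp_all)
  moreover have "mtrace (mat_inv (fim Wc0 Ws0)) > 0"
    using Wc0 Ws0 inv0 assms by (intro FIM_mtrace_inverse_pos) simp_all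
  moreover have "r\<^sup>2 > 1"
    using \<open>r > 1\<close> by (simp add: one_less_power)
  ultimately have inv: "invertible_mat (fim (of_real r \<cdot>\<^sub>m Wc) (of_real r \<cdot>\<^sub>m Ws))"
    and less: "mtrace (mat_inv (fim (of_real r \<cdot>\<^sub>m Wc) (of_real r \<cdot>\<^sub>m Ws))) < mtrace (mat_inv (fim Wc0 Ws0))"
    using mat_inv_smult(1)[OF FIM_carrier inv0, of "r\<^sup>2"] mtrace_mat_inv_smult_less[OF FIM_carrier inv0]
      \<open>r > 1\<close> by simp_all
  have "- delta_s * mtrace (mat_inv (fim (of_real r \<cdot>\<^sub>m Wc) (of_real r \<cdot>\<^sub>m Ws)))
      \<le> - delta_s * mtrace (mat_inv (fim Wc0 Ws0))"
    using opt feasible inv unfolding CRLB_optimal_def by blast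
  with less \<open>delta_s > 0\<close> show False
    by simp
qed


lemma CRLB_optimal_orthogonal_part_eq_0:
  assumes opt: "CRLB_optimal K Ns Pt delta_s Wc Ws" and "M > 0" "L > 0" "sigma2 > 0" "delta_s > 0"
    and T: "T \<in> carrier_mat (M + (M + M)) Ns" and V: "V \<in> carrier_mat Nt Ns"
    and decomp: "Ws = tx_steering_block * T + V"
    and orth: "herm tx_steering_block * V = 0\<^sub>m (M + (M + M)) Ns"
  shows "V = 0\<^sub>m Nt Ns"
proof (rule ccontr)
  assume "V \<noteq> 0\<^sub>m Nt Ns"
  have Wc: "Wc \<in> carrier_mat Nt K" and power: "tx_power Wc Ws \<le> Pt"
    using opt by (simp_all add: CRLB_optimal_def feasible_def tx_power_def)
  have X: "tx_steering_block \<in> carrier_mat Nt (M + (M + M))"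
    by (intro hcat_carrier steer_carrier)
  note XT = mult_carrier_mat[OF X T]
  note orth_A = adjoint_hcat_mult_eq_0D[OF steer_carrier(1) hcat_carrier[OF steer_carrier(2,3)] V orth]
  note orth_At_Ap = adjoint_hcat_mult_eq_0D[OF steer_carrier(2,3) V orth_A(2)]
  have "herm Y * hcat Wc (tx_steering_block * T) = herm Y * hcat Wc Ws"
    if "Y \<in> {steer Nt M a th ph, steer_dth Nt M a th ph, steer_dph Nt M a th ph}" for Y
    unfolding decomp using that Wc XT V orth_A(1) orth_At_Ap
    by (intro adjoint_mult_hcat_add_orthogonal[symmetric, where n = Nt and m = M]) auto
  then have "Pt \<le> tx_power Wc (tx_steering_block * T)"
    using Wc XT assms(2-5) by (intro CRLB_optimal_power_tight[OF opt]) auto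
  moreover have "tx_power Wc (tx_steering_block * T) < tx_power Wc Ws"
    unfolding decomp using Wc XT V \<open>V \<noteq> 0\<^sub>m Nt Ns\<close> adjoint_mult_mult_eq_0[OF X T V orth]
    by (intro tx_power_orthogonal_less)
  ultimately show False
    using power by simp
qed

end

theorem lemma5:
  fixes Nt Nr K M L Ns :: nat
    and sigma2 Pt delta_s :: real
    and a b :: "real \<Rightarrow> real \<Rightarrow> nat \<Rightarrow> complex"
    and th ph :: "nat \<Rightarrow> real" and al :: "nat \<Rightarrow> complex"
    and Wc_opt Ws_opt :: "complex mat"
  assumes "Nt > 0" "Nr > 0" "K > 0" "M > 0" "L > 0"
    and "sigma2 > 0" "Pt > 0" "delta_s > 0"
    and a_diff: "\<And>x i. i < Nt \<Longrightarrow> (\<lambda>p. a (fst p) (snd p) i) differentiable (at x)"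
    and b_diff: "\<And>x i. i < Nr \<Longrightarrow> (\<lambda>p. b (fst p) (snd p) i) differentiable (at x)"
    and opt_feas: "feasible Nt K Ns Pt Wc_opt Ws_opt"
    and opt_inv: "invertible_mat (FIM Nt Nr M L sigma2 a b th ph al Wc_opt Ws_opt)"
    and opt_max: "\<And>Wc Ws. feasible Nt K Ns Pt Wc Ws \<Longrightarrow>
                    invertible_mat (FIM Nt Nr M L sigma2 a b th ph al Wc Ws) \<Longrightarrow>
                    - delta_s * mtrace (mat_inv (FIM Nt Nr M L sigma2 a b th ph al Wc Ws))
                    \<le> - delta_s * mtrace (mat_inv (FIM Nt Nr M L sigma2 a b th ph al Wc_opt Ws_opt))"
  shows "vec_space.rank Nt Ws_opt \<le> 3 * M"
proof -
  let ?X = "hcat (steer Nt M a th ph) (hcat (steer_dth Nt M a th ph) (steer_dph Nt M a th ph))"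
  have opt: "CRLB_optimal Nt Nr M L sigma2 a b th ph al K Ns Pt delta_s Wc_opt Ws_opt"
    using opt_feas opt_inv opt_max by (simp add: CRLB_optimal_def)
  have X: "?X \<in> carrier_mat Nt (M + (M + M))"
    by (intro hcat_carrier steer_carrier)
  have Ws: "Ws_opt \<in> carrier_mat Nt Ns"
    using opt_feas by (simp add: feasible_def)
  obtain T V where T: "T \<in> carrier_mat (M + (M + M)) Ns" and V: "V \<in> carrier_mat Nt Ns"
    and decomp: "Ws_opt = ?X * T + V" and orth: "herm ?X * V = 0\<^sub>m (M + (M + M)) Ns"
    using orthogonal_decomposition[OF X Ws] by blast
  have "V = 0\<^sub>m Nt Ns"
    by (rule CRLB_optimal_orthogonal_part_eq_0[OF opt assms(4,5,6,8) T V decomp orth])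
  then have "Ws_opt = ?X * T"
    using decomp mult_carrier_mat[OF X T] by simp
  then show ?thesis
    using rank_mult_le[OF X T] by simp
qed

end
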